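(* Assume $q<\ell$. For every $Z\in S^{\ell}_{q,p}$, the set $$\mathcal{C}_Z:=\bigcup_{E\in\Lambda^{\ell}_Z}T^{1,0}_Z\,Gr(q,E)$$ is not contained in any proper complex linear subspace of $T^{1,0}_ZS^{\ell}_{q,p}$.
   Context: Let $q<p$ and $q\le\ell\le(p+q)/2$ be positive integers, $m=p+q-\ell$. $Gr(q,p)$ is the Grassmannian of $q$-planes in $\mathbb{C}^{p+q}$; $\langle u,v\rangle_{\ell,m}=-\sum_{i=1}^{\ell}u_i\bar v_i+\sum_{i=\ell+1}^{p+q}u_i\bar v_i$; $S^{\ell}_{q,p}=\{Z\in Gr(q,p):\langle\cdot,\cdot\rangle_{\ell,m}|_Z=0\}$ with the CR structure induced from $Gr(q,p)$. $N(\ell,m)$ is the set of subspaces $F\subset\mathbb{C}^{p+q}$ with $\langle\cdot,\cdot\rangle_{\ell,m}|_F=0$, and for $F\in N(\ell,m)$ and $n\ge\dim F$, $\Lambda^n_F=\{E\in N(\ell,m):\dim E=n,\ F\subset E\}$. For $E\in\Lambda^\ell_Z$, $Gr(q,E)$ (the $q$-planes contained in $E$) is a complex submanifold of $Gr(q,p)$ contained in $S^{\ell}_{q,p}$ and passing through $Z$. *)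

theory Defs
  imports Complex_Main "HOL-Library.Function_Algebras"
begin

text \<open>Model of C^(p+q): functions nat => complex vanishing at indices >= p+q,
  with pointwise addition (Function_Algebras) and complex scalar multiplication vsc.\<close>

type_synonym cvec = "nat \<Rightarrow> complex"

definition vsc :: "complex \<Rightarrow> cvec \<Rightarrow> cvec" where
  "vsc c u = (\<lambda>i. c * u i)"

definition ambient :: "nat \<Rightarrow> cvec set" where
  "ambient n = {u. \<forall>i\<ge>n. u i = 0}"

definition csubspace :: "nat \<Rightarrow> cvec set \<Rightarrow> bool" where
  "csubspace n F \<longleftrightarrow> module.subspace vsc F \<and> F \<subseteq> ambient n"

definition cdim :: "cvec set \<Rightarrow> nat" where
  "cdim F = vector_space.dim vsc F"

definition herm :: "nat \<Rightarrow> nat \<Rightarrow> cvec \<Rightarrow> cvec \<Rightarrow> complex" where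
  "herm n l u v = (\<Sum>i<n. (if i < l then -1 else 1) * u i * cnj (v i))"

definition isotropic :: "nat \<Rightarrow> nat \<Rightarrow> cvec set \<Rightarrow> bool" where
  "isotropic n l F \<longleftrightarrow> (\<forall>u\<in>F. \<forall>v\<in>F. herm n l u v = 0)"

definition Gr :: "nat \<Rightarrow> nat \<Rightarrow> cvec set set" where
  "Gr q p = {Z. csubspace (p+q) Z \<and> cdim Z = q}"

definition Sgr :: "nat \<Rightarrow> nat \<Rightarrow> nat \<Rightarrow> cvec set set" where
  "Sgr l q p = {Z \<in> Gr q p. isotropic (p+q) l Z}"

definition Nset :: "nat \<Rightarrow> nat \<Rightarrow> cvec set set" where
  "Nset n l = {F. csubspace n F \<and> isotropic n l F}"

definition Lambda :: "nat \<Rightarrow> nat \<Rightarrow> nat \<Rightarrow> cvec set \<Rightarrow> cvec set set" where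
  "Lambda n l k F = {E \<in> Nset n l. cdim E = k \<and> F \<subseteq> E}"

text \<open>Complex linear maps from Z into Y, represented as functions vanishing off Z.
  Tangent vectors of Gr(q,p) at Z are elements of Hom(Z, C^n / Z), i.e. the
  classes of hom_into Z (ambient n) modulo hom_into Z Z.\<close>
definition hom_into :: "cvec set \<Rightarrow> cvec set \<Rightarrow> (cvec \<Rightarrow> cvec) set" where
  "hom_into Z Y = {\<phi>. (\<forall>u\<in>Z. \<forall>v\<in>Z. \<phi> (u + v) = \<phi> u + \<phi> v)
                     \<and> (\<forall>c. \<forall>u\<in>Z. \<phi> (vsc c u) = vsc c (\<phi> u))
                     \<and> (\<forall>u\<in>Z. \<phi> u \<in> Y) \<and> (\<forall>u. u \<notin> Z \<longrightarrow> \<phi> u = 0)}"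

definition hsc :: "complex \<Rightarrow> (cvec \<Rightarrow> cvec) \<Rightarrow> (cvec \<Rightarrow> cvec)" where
  "hsc c \<phi> = (\<lambda>u. vsc c (\<phi> u))"

text \<open>(Lift of) the real tangent space T_Z S^l_{q,p}: derivative of the defining
  condition <z,w> = 0 on Z.\<close>
definition TS :: "nat \<Rightarrow> nat \<Rightarrow> cvec set \<Rightarrow> (cvec \<Rightarrow> cvec) set" where
  "TS n l Z = {\<phi> \<in> hom_into Z (ambient n).
      \<forall>z\<in>Z. \<forall>w\<in>Z. herm n l (\<phi> z) w + herm n l z (\<phi> w) = 0}"

text \<open>(Lift of) T^{1,0}_Z S^l_{q,p}, the CR (complex) tangent space T \<inter> J T,
  where J is multiplication by i.\<close>
definition T10S :: "nat \<Rightarrow> nat \<Rightarrow> cvec set \<Rightarrow> (cvec \<Rightarrow> cvec) set" where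
  "T10S n l Z = {\<phi> \<in> TS n l Z. hsc \<i> \<phi> \<in> TS n l Z}"

text \<open>(Lift of) T^{1,0}_Z Gr(q,E) = Hom(Z, E/Z) inside Hom(Z, C^n/Z)\<close>
definition T10GrE :: "cvec set \<Rightarrow> cvec set \<Rightarrow> (cvec \<Rightarrow> cvec) set" where
  "T10GrE Z E = hom_into Z E"

definition CZ :: "nat \<Rightarrow> nat \<Rightarrow> cvec set \<Rightarrow> (cvec \<Rightarrow> cvec) set" where
  "CZ n l Z = (\<Union>E\<in>Lambda n l l Z. T10GrE Z E)"

end

theory Submission
  imports Defs
begin

text \<open>A tangent vector \<phi> \<in> T^{1,0}_Z S^l_{q,p} is a linear map Z \<rightarrow> C^{p+q} whose tangency
  condition <\<phi> z, w> + <z, \<phi> w> = 0 is also satisfied by i\<phi>; together the two conditions force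
  <\<phi> z, w> = 0, i.e. \<phi> takes values in Z^\<perp>. Such a \<phi> is a sum of rank-one maps
  z \<mapsto> \<lambda>(z) x with x \<in> Z^\<perp>, and these maps depend linearly on x. So it suffices that Z^\<perp> is
  spanned by vectors x lying in some E \<in> \<Lambda>^l_Z, since then z \<mapsto> \<lambda>(z) x is tangent to Gr(q,E).
  A null vector x \<in> Z^\<perp> spans with Z an isotropic space, which extends to an l-dimensional
  one: as long as an isotropic space has dimension below l \<le> m, its orthogonal contains
  a negative and a positive vector, orthogonal to each other, and a suitable combination of
  them is a new null vector. A non-null w \<in> Z^\<perp> is the midpoint of the null vectors w \<plusminus> t u,
  where u \<in> Z^\<perp> is orthogonal to w and has norm of the opposite sign.\<close>

interpretation vs: vector_space vsc
  by unfold_locales (auto simp: vsc_def fun_eq_iff algebra_simps)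

interpretation hs: vector_space hsc
  by unfold_locales (auto simp: hsc_def vsc_def fun_eq_iff algebra_simps)

lemma sum_fun_apply: "(sum f A) x = (\<Sum>a\<in>A. f a x)"
  for f :: "'a \<Rightarrow> 'b \<Rightarrow> 'c::comm_monoid_add"
  by (induction A rule: infinite_finite_induct) auto

lemma vsc_apply: "vsc c u i = c * u i"
  by (simp add: vsc_def)

lemma vs_span_midpoint:
  assumes "a + x \<in> vs.span S" "a - x \<in> vs.span S"
  shows "a \<in> vs.span S"
proof -
  have "a = vsc (1/2) ((a + x) + (a - x))"
    by (simp add: vsc_def fun_eq_iff field_simps)
  then show ?thesis
    using assms by (metis vs.span_add vs.span_scale)
qed

section \<open>Coordinate subspaces\<close>

definition unit_vec :: "nat \<Rightarrow> cvec" where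
  "unit_vec i = (\<lambda>j. if j = i then 1 else 0)"

definition coord_space :: "nat set \<Rightarrow> cvec set" where
  "coord_space I = {v. \<forall>i. i \<notin> I \<longrightarrow> v i = 0}"

lemma ambient_eq_coord_space: "ambient n = coord_space {..<n}"
  by (auto simp: ambient_def coord_space_def)

lemma subspace_coord_space: "vs.subspace (coord_space I)"
  by (simp add: vs.subspace_def coord_space_def vsc_def)

lemma subspace_ambient: "vs.subspace (ambient n)"
  by (simp add: ambient_eq_coord_space subspace_coord_space)

lemma coord_space_in_ambient: "v \<in> coord_space I \<Longrightarrow> I \<subseteq> {..<n} \<Longrightarrow> v \<in> ambient n"
  by (auto simp: ambient_eq_coord_space coord_space_def)

lemma coord_space_eq_span:
  assumes "finite I"
  shows "coord_space I = vs.span (unit_vec ` I)"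
proof
  show "vs.span (unit_vec ` I) \<subseteq> coord_space I"
    by (rule vs.span_minimal[OF _ subspace_coord_space]) (auto simp: coord_space_def unit_vec_def)
  show "coord_space I \<subseteq> vs.span (unit_vec ` I)"
  proof
    fix v assume v: "v \<in> coord_space I"
    have "v = (\<Sum>i\<in>I. vsc (v i) (unit_vec i))"
    proof
      fix j
      show "v j = (\<Sum>i\<in>I. vsc (v i) (unit_vec i)) j"
        using v assms by (cases "j \<in> I")
          (auto simp: vsc_apply sum_fun_apply unit_vec_def coord_space_def if_distrib cong: if_cong)
    qed
    also have "\<dots> \<in> vs.span (unit_vec ` I)"
      by (intro vs.span_sum vs.span_scale vs.span_base) auto
    finally show "v \<in> vs.span (unit_vec ` I)" .
  qed
qed

lemma independent_unit_vec: "vs.independent (unit_vec ` I)"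
  unfolding vs.independent_explicit_finite_subsets
proof (intro allI impI ballI)
  fix S u v
  assume S: "S \<subseteq> unit_vec ` I" "finite S" and eq: "(\<Sum>v\<in>S. vsc (u v) v) = 0" and v: "v \<in> S"
  then obtain j where j: "v = unit_vec j" by auto
  have "w j = 0" if "w \<in> S - {v}" for w
    using that S j by (auto simp: unit_vec_def)
  then have "(\<Sum>w\<in>S. u w * w j) = u v * v j"
    by (simp add: sum.remove[OF S(2) v] sum.neutral)
  moreover have "(\<Sum>w\<in>S. u w * w j) = 0"
    using fun_cong[OF eq, of j] by (simp add: vsc_apply sum_fun_apply)
  ultimately show "u v = 0"
    using j by (simp add: unit_vec_def)
qed

lemma card_unit_vec_image: "card (unit_vec ` I) = card I"
proof -
  have "inj unit_vec"
    unfolding inj_def unit_vec_def fun_eq_iff by (metis one_neq_zero)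
  then show ?thesis by (simp add: card_image inj_on_subset)
qed

lemma csubspace_obtain_basis:
  assumes "csubspace n Z"
  obtains B where "finite B" "vs.independent B" "vs.span B = Z" "card B = cdim Z"
proof -
  obtain B where B: "B \<subseteq> Z" "vs.independent B" "Z \<subseteq> vs.span B" "card B = vs.dim Z"
    using vs.basis_exists by blast
  have Z: "vs.subspace Z" "Z \<subseteq> ambient n"
    using assms by (auto simp: csubspace_def)
  have "vs.span B = Z"
    using vs.span_minimal[OF B(1) Z(1)] B(3) by blast
  moreover have "B \<subseteq> vs.span (unit_vec ` {..<n})"
    using B(1) Z(2) by (simp add: ambient_eq_coord_space coord_space_eq_span)
  then have "finite B"
    using vs.independent_span_bound[OF _ B(2)] by blast
  ultimately show ?thesis
    using that B by (simp add: cdim_def)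
qed

section \<open>The Hermitian form\<close>

lemma herm_add_left: "herm n l (u + v) w = herm n l u w + herm n l v w"
  by (simp add: herm_def algebra_simps sum.distrib)

lemma herm_add_right: "herm n l w (u + v) = herm n l w u + herm n l w v"
  by (simp add: herm_def algebra_simps sum.distrib)

lemma herm_diff_left: "herm n l (u - v) w = herm n l u w - herm n l v w"
  by (simp add: herm_def algebra_simps sum_subtractf)

lemma herm_diff_right: "herm n l w (u - v) = herm n l w u - herm n l w v"
  by (simp add: herm_def algebra_simps sum_subtractf)

lemma herm_scale_left: "herm n l (vsc c u) w = c * herm n l u w"
  by (simp add: vsc_apply herm_def algebra_simps sum_distrib_left)

lemma herm_scale_right: "herm n l w (vsc c u) = cnj c * herm n l w u"
  by (simp add: vsc_apply herm_def algebra_simps sum_distrib_left)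

lemma herm_zero_left [simp]: "herm n l 0 w = 0"
  by (simp add: herm_def)

lemma herm_zero_right [simp]: "herm n l w 0 = 0"
  by (simp add: herm_def)

lemma herm_commute: "herm n l v u = cnj (herm n l u v)"
  unfolding herm_def by (simp add: algebra_simps) (rule sum.cong, auto)

lemma herm_eq_0_commute: "herm n l v u = 0 \<longleftrightarrow> herm n l u v = 0"
  by (metis complex_cnj_zero_iff herm_commute)

lemma herm_self: "herm n l u u = of_real (\<Sum>i<n. (if i < l then -1 else 1) * (cmod (u i))\<^sup>2)"
proof -
  have "(if i < l then -1 else 1) * u i * cnj (u i)
      = of_real ((if i < l then -1 else 1) * (cmod (u i))\<^sup>2)" for i
    by (simp add: complex_norm_square[symmetric] mult.assoc)
  then show ?thesis by (simp add: herm_def)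
qed

lemma herm_self_real: "herm n l u u = of_real (Re (herm n l u u))"
  by (simp add: herm_self)

lemma herm_self_neg:
  assumes "a \<in> coord_space {..<l}" "a \<noteq> 0" "l \<le> n"
  shows "Re (herm n l a a) < 0"
proof -
  obtain i where i: "a i \<noteq> 0" "i < l"
    using assms(1,2) by (auto simp: fun_eq_iff coord_space_def)
  have "0 < (\<Sum>j<n. - ((if j < l then -1 else 1) * (cmod (a j))\<^sup>2))"
    by (rule sum_pos2[of _ i]) (use i assms in \<open>auto simp: coord_space_def\<close>)
  then show ?thesis by (simp add: herm_self sum_negf)
qed

lemma herm_self_pos:
  assumes "a \<in> coord_space {l..<n}" "a \<noteq> 0"
  shows "Re (herm n l a a) > 0"
proof -
  obtain i where i: "a i \<noteq> 0" "l \<le> i" "i < n"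
    using assms by (auto simp: fun_eq_iff coord_space_def)
  have "0 < (\<Sum>j<n. (if j < l then -1 else 1) * (cmod (a j))\<^sup>2)"
    by (rule sum_pos2[of _ i]) (use i assms in \<open>auto simp: coord_space_def\<close>)
  then show ?thesis by (simp add: herm_self)
qed

lemma herm_coord_space_orthogonal:
  assumes "a \<in> coord_space {..<l}" "b \<in> coord_space {l..<n}"
  shows "herm n l a b = 0"
  unfolding herm_def by (rule sum.neutral) (use assms in \<open>auto simp: coord_space_def\<close>)

lemma herm_span_right:
  assumes "\<And>v. v \<in> S \<Longrightarrow> herm n l x v = 0" "y \<in> vs.span S"
  shows "herm n l x y = 0"
proof -
  have "vs.subspace {v. herm n l x v = 0}"
    by (simp add: vs.subspace_def herm_add_right herm_scale_right)
  then show ?thesis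
    using vs.span_minimal[of S "{v. herm n l x v = 0}"] assms by blast
qed

lemma isotropic_span:
  assumes "\<And>u v. u \<in> S \<Longrightarrow> v \<in> S \<Longrightarrow> herm n l u v = 0"
  shows "isotropic n l (vs.span S)"
  unfolding isotropic_def
proof (intro ballI)
  fix x y assume "x \<in> vs.span S" "y \<in> vs.span S"
  then show "herm n l x y = 0"
    using assms herm_span_right herm_eq_0_commute by metis
qed

lemma isotropic_span_insert:
  assumes "herm n l x x = 0" "\<forall>f\<in>vs.span B. herm n l x f = 0" "isotropic n l (vs.span B)"
  shows "isotropic n l (vs.span (insert x B))"
proof (rule isotropic_span)
  fix u v assume "u \<in> insert x B" "v \<in> insert x B"
  then show "herm n l u v = 0"
    using assms vs.span_base herm_eq_0_commute unfolding isotropic_def by blast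
qed

text \<open>The map a \<mapsto> (<a, b_j>)_j is linear, so it has a nontrivial kernel on a space of larger
  dimension.\<close>

lemma exists_coord_vector_orthogonal_span:
  assumes "finite I" "finite B" "card B < card I"
  shows "\<exists>a\<in>coord_space I. a \<noteq> 0 \<and> (\<forall>f\<in>vs.span B. herm n l a f = 0)"
proof -
  define k where "k = card B"
  obtain h where h: "bij_betw h {0..<k} B"
    using ex_bij_betw_nat_finite[OF assms(2)] k_def by blast
  define g where "g a = (\<lambda>i. if i < k then herm n l a (h i) else 0)" for a
  have "Vector_Spaces.linear vsc vsc g"
    unfolding Vector_Spaces.linear_iff
    by (auto simp: vsc_apply vs.vector_space_axioms g_def fun_eq_iff herm_add_left herm_scale_left)
  then have g: "module_hom vsc vsc g"
    by (simp add: module_hom_iff_linear)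
  have "\<not> inj_on g (vs.span (unit_vec ` I))"
  proof
    assume inj: "inj_on g (vs.span (unit_vec ` I))"
    have "vs.independent (g ` unit_vec ` I)"
      by (rule module_hom.independent_injective_image[OF g independent_unit_vec inj])
    moreover have "g ` unit_vec ` I \<subseteq> vs.span (unit_vec ` {..<k})"
      by (auto simp: g_def coord_space_def simp flip: coord_space_eq_span)
    ultimately have "card (g ` unit_vec ` I) \<le> card (unit_vec ` {..<k})"
      using vs.independent_span_bound by blast
    moreover have "inj_on g (unit_vec ` I)"
      using inj vs.span_superset by (rule inj_on_subset)
    ultimately show False
      using assms(3) by (simp add: card_image card_unit_vec_image k_def)
  qed
  then obtain a where a: "a \<in> vs.span (unit_vec ` I)" "a \<noteq> 0" "g a = 0"
    using module_hom.inj_on_iff_eq_0[OF g vs.subspace_span] by blast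
  have "herm n l a b = 0" if b: "b \<in> B" for b
  proof -
    obtain i where "i < k" "b = h i"
      using h b by (auto simp: bij_betw_def)
    then show ?thesis
      using fun_cong[OF a(3), of i] by (simp add: g_def)
  qed
  then show ?thesis
    using a herm_span_right[of B n l a] coord_space_eq_span[OF assms(1)] by blast
qed

lemma obtain_orthogonal_opposite_pair:
  assumes "l + l \<le> n" "finite B" "card B < l"
  obtains a b where "a \<in> ambient n" "b \<in> ambient n" "herm n l a b = 0"
    "Re (herm n l a a) < 0" "Re (herm n l b b) > 0"
    "\<forall>f\<in>vs.span B. herm n l a f = 0" "\<forall>f\<in>vs.span B. herm n l b f = 0"
proof -
  obtain a where a: "a \<in> coord_space {..<l}" "a \<noteq> 0" "\<forall>f\<in>vs.span B. herm n l a f = 0"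
    using exists_coord_vector_orthogonal_span[of "{..<l}" B n l] assms by auto
  obtain b where b: "b \<in> coord_space {l..<n}" "b \<noteq> 0" "\<forall>f\<in>vs.span B. herm n l b f = 0"
  proof -
    have "card B < card {l..<n}"
      using assms by simp
    then show ?thesis
      using that exists_coord_vector_orthogonal_span[of "{l..<n}" B n l] assms(2) by blast
  qed
  show ?thesis
  proof (rule that)
    show "a \<in> ambient n"
      by (rule coord_space_in_ambient[OF a(1)]) (use assms(1) in auto)
    show "b \<in> ambient n"
      by (rule coord_space_in_ambient[OF b(1)]) auto
    show "herm n l a b = 0"
      using a(1) b(1) by (rule herm_coord_space_orthogonal)
    show "Re (herm n l a a) < 0"
      using herm_self_neg[OF a(1,2)] assms(1) by simp
    show "Re (herm n l b b) > 0"
      using herm_self_pos[OF b(1,2)] .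
  qed (use a(3) b(3) in blast)+
qed

lemma herm_self_add_orthogonal:
  assumes "herm n l a b = 0"
  shows "herm n l (a + vsc c b) (a + vsc c b) = herm n l a a + c * cnj c * herm n l b b"
proof -
  have "herm n l b a = 0"
    using assms herm_eq_0_commute by blast
  then show ?thesis
    using assms by (simp add: herm_add_left herm_add_right herm_scale_left herm_scale_right)
qed

lemma obtain_null_pair:
  assumes "herm n l a b = 0" "Re (herm n l a a) * Re (herm n l b b) < 0"
  obtains c where "herm n l (a + vsc c b) (a + vsc c b) = 0" "herm n l (a - vsc c b) (a - vsc c b) = 0"
proof -
  define \<alpha> where "\<alpha> = Re (herm n l a a)"
  define \<beta> where "\<beta> = Re (herm n l b b)"
  define s where "s = sqrt (- \<alpha> / \<beta>)"
  have "- \<alpha> / \<beta> \<ge> 0" "\<beta> \<noteq> 0"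
    using assms(2) unfolding \<alpha>_def \<beta>_def
    by (auto simp: divide_nonneg_neg divide_nonpos_pos mult_less_0_iff)
  then have s: "\<alpha> + s\<^sup>2 * \<beta> = 0"
    by (simp add: s_def)
  have null: "herm n l (a + vsc c b) (a + vsc c b) = 0" if c: "c * cnj c = of_real (s\<^sup>2)" for c
  proof -
    have "herm n l (a + vsc c b) (a + vsc c b) = of_real \<alpha> + of_real (s\<^sup>2) * of_real \<beta>"
      unfolding herm_self_add_orthogonal[OF assms(1)] c \<alpha>_def \<beta>_def
      by (simp flip: herm_self_real)
    also have "\<dots> = of_real (\<alpha> + s\<^sup>2 * \<beta>)"
      by simp
    finally show ?thesis
      using s by simp
  qed
  have "a - vsc (of_real s) b = a + vsc (- of_real s) b"
    by (simp add: vsc_def fun_eq_iff)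
  then show ?thesis
    using that null[of "of_real s"] null[of "- of_real s"] by (simp add: power2_eq_square)
qed

section \<open>Isotropic extension\<close>

lemma isotropic_extend_by_one:
  assumes "l + l \<le> n" "finite B" "card B < l" "isotropic n l (vs.span B)"
  shows "\<exists>x\<in>ambient n. x \<notin> vs.span B \<and> isotropic n l (vs.span (insert x B))"
proof -
  obtain a b where ab: "a \<in> ambient n" "b \<in> ambient n" "herm n l a b = 0"
    "Re (herm n l a a) < 0" "Re (herm n l b b) > 0"
    "\<forall>f\<in>vs.span B. herm n l a f = 0" "\<forall>f\<in>vs.span B. herm n l b f = 0"
    using obtain_orthogonal_opposite_pair[OF assms(1-3)] by blast
  obtain c where c: "herm n l (a + vsc c b) (a + vsc c b) = 0" "herm n l (a - vsc c b) (a - vsc c b) = 0"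
    using obtain_null_pair[OF ab(3)] ab(4,5) mult_neg_pos by blast
  have "a \<notin> vs.span B"
    using assms(4) ab(4) unfolding isotropic_def by fastforce
  then have "a + vsc c b \<notin> vs.span B \<or> a - vsc c b \<notin> vs.span B"
    using vs_span_midpoint by blast
  moreover have "\<forall>f\<in>vs.span B. herm n l (a + vsc c b) f = 0"
    "\<forall>f\<in>vs.span B. herm n l (a - vsc c b) f = 0"
    using ab(6,7) by (simp_all add: herm_add_left herm_diff_left herm_scale_left)
  moreover have "a + vsc c b \<in> ambient n" "a - vsc c b \<in> ambient n"
    using ab(1,2) subspace_ambient
    by (auto intro: vs.subspace_add vs.subspace_diff vs.subspace_scale)
  ultimately show ?thesis
    using isotropic_span_insert[OF c(1) _ assms(4)] isotropic_span_insert[OF c(2) _ assms(4)]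
    by blast
qed

lemma isotropic_extend:
  assumes "l + l \<le> n" "finite B" "vs.independent B" "B \<subseteq> ambient n"
    "isotropic n l (vs.span B)" "card B \<le> l"
  obtains B' where "B \<subseteq> B'" "vs.independent B'" "B' \<subseteq> ambient n"
    "isotropic n l (vs.span B')" "card B' = l"
proof -
  have "\<exists>B'. B \<subseteq> B' \<and> vs.independent B' \<and> B' \<subseteq> ambient n \<and> isotropic n l (vs.span B') \<and> card B' = l"
    if "finite B" "vs.independent B" "B \<subseteq> ambient n" "isotropic n l (vs.span B)" "card B + j = l"
    for j B
    using that
  proof (induction j arbitrary: B)
    case 0
    then show ?case by auto
  next
    case (Suc j)
    then obtain x where x: "x \<in> ambient n" "x \<notin> vs.span B" "isotropic n l (vs.span (insert x B))"
      using isotropic_extend_by_one[OF assms(1)] by (metis add_Suc_right less_add_Suc1)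
    then have "x \<notin> B"
      using vs.span_base by blast
    then have "\<exists>B'. insert x B \<subseteq> B' \<and> vs.independent B' \<and> B' \<subseteq> ambient n
        \<and> isotropic n l (vs.span B') \<and> card B' = l"
      using Suc x vs.independent_insertI by (intro Suc.IH) auto
    then show ?case by blast
  qed
  then show ?thesis
    using that assms(2-6) le_add_diff_inverse by blast
qed

section \<open>The orthogonal complement of Z\<close>

definition herm_perp :: "nat \<Rightarrow> nat \<Rightarrow> cvec set \<Rightarrow> cvec set" where
  "herm_perp n l Z = {v \<in> ambient n. \<forall>z\<in>Z. herm n l v z = 0}"

lemma subspace_herm_perp: "vs.subspace (herm_perp n l Z)"
  using subspace_ambient[of n]
  by (auto simp: vs.subspace_def herm_perp_def herm_add_left herm_scale_left)

lemma null_herm_perp_in_Lambda: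
  assumes "l + l \<le> n" "csubspace n Z" "isotropic n l Z" "cdim Z < l"
    and "x \<in> herm_perp n l Z" "herm n l x x = 0"
  shows "\<exists>E\<in>Lambda n l l Z. x \<in> E"
proof -
  obtain BZ where BZ: "finite BZ" "vs.independent BZ" "vs.span BZ = Z" "card BZ = cdim Z"
    using csubspace_obtain_basis[OF assms(2)] by blast
  have Z: "Z \<subseteq> ambient n" "BZ \<subseteq> Z"
    using assms(2) BZ(3) vs.span_superset by (auto simp: csubspace_def)
  define B where "B = (if x \<in> Z then BZ else insert x BZ)"
  have B: "finite B" "vs.independent B" "B \<subseteq> ambient n" "isotropic n l (vs.span B)"
    "card B \<le> l" "insert x Z \<subseteq> vs.span B"
  proof -
    show "finite B" "vs.independent B"
      using BZ vs.independent_insertI[of x BZ] by (auto simp: B_def)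
    show "B \<subseteq> ambient n"
      using Z assms(5) by (auto simp: B_def herm_perp_def)
    show "isotropic n l (vs.span B)"
      using assms(3,5,6) BZ(3) isotropic_span_insert[of n l x BZ] by (auto simp: B_def herm_perp_def)
    show "card B \<le> l"
      using BZ assms(4) by (auto simp: B_def card_insert_if)
    show "insert x Z \<subseteq> vs.span B"
      using BZ(3) vs.span_mono[of BZ "insert x BZ"] by (auto simp: B_def intro: vs.span_base)
  qed
  obtain B' where B': "B \<subseteq> B'" "vs.independent B'" "B' \<subseteq> ambient n"
    "isotropic n l (vs.span B')" "card B' = l"
    using isotropic_extend[OF assms(1) B(1-5)] by blast
  have "vs.span B' \<in> Lambda n l l Z"
    using B' B(6) vs.span_mono[OF B'(1)] vs.span_minimal[OF B'(3) subspace_ambient]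
    by (auto simp: Lambda_def Nset_def csubspace_def cdim_def vs.dim_eq_card_independent)
  moreover have "x \<in> vs.span B'"
    using B(6) vs.span_mono[OF B'(1)] by auto
  ultimately show ?thesis by blast
qed

lemma herm_orthogonalize:
  fixes v w :: cvec
  assumes "herm n l w w = of_real \<beta>" "\<beta> \<noteq> 0"
  defines "u \<equiv> v - vsc (herm n l v w / of_real \<beta>) w"
  shows "herm n l u w = 0"
    and "\<beta> * Re (herm n l u u) = \<beta> * Re (herm n l v v) - (cmod (herm n l v w))\<^sup>2"
proof -
  define d where "d = herm n l v w"
  show uw: "herm n l u w = 0"
    using assms by (simp add: u_def herm_diff_left herm_scale_left)
  have "herm n l u u = herm n l u v"
    using uw by (simp add: u_def herm_diff_right herm_scale_right)
  also have "\<dots> = herm n l v v - d / of_real \<beta> * cnj d"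
    by (simp add: u_def d_def herm_diff_left herm_scale_left herm_commute[of n l w v])
  also have "d / of_real \<beta> * cnj d = of_real ((cmod d)\<^sup>2 / \<beta>)"
    by (simp add: complex_norm_square[symmetric])
  finally have "Re (herm n l u u) = Re (herm n l v v - of_real ((cmod d)\<^sup>2 / \<beta>))"
    by (rule arg_cong)
  then show "\<beta> * Re (herm n l u u) = \<beta> * Re (herm n l v v) - (cmod (herm n l v w))\<^sup>2"
    using assms(2) by (simp add: d_def field_simps)
qed

lemma herm_perp_opposite_sign:
  assumes "l + l \<le> n" "csubspace n Z" "cdim Z < l" "\<beta> \<noteq> 0"
  obtains v where "v \<in> herm_perp n l Z" "Re (herm n l v v) * \<beta> < 0"
proof -
  obtain BZ where BZ: "finite BZ" "vs.span BZ = Z" "card BZ = cdim Z"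
    using csubspace_obtain_basis[OF assms(2)] by blast
  obtain a b where "a \<in> ambient n" "b \<in> ambient n"
    "Re (herm n l a a) < 0" "Re (herm n l b b) > 0"
    "\<forall>f\<in>Z. herm n l a f = 0" "\<forall>f\<in>Z. herm n l b f = 0"
    using obtain_orthogonal_opposite_pair[of l n BZ] assms(1,3) BZ by metis
  then have "a \<in> herm_perp n l Z" "b \<in> herm_perp n l Z"
    "Re (herm n l a a) * \<beta> < 0 \<or> Re (herm n l b b) * \<beta> < 0"
    using assms(4) by (auto simp: herm_perp_def mult_less_0_iff)
  then show ?thesis
    using that by blast
qed

lemma herm_perp_subset_span_Lambda:
  assumes "l + l \<le> n" "csubspace n Z" "isotropic n l Z" "cdim Z < l"
  shows "herm_perp n l Z \<subseteq> vs.span (\<Union>(Lambda n l l Z))"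
proof
  fix w assume w: "w \<in> herm_perp n l Z"
  let ?U = "\<Union>(Lambda n l l Z)"
  have null: "x \<in> vs.span ?U" if "x \<in> herm_perp n l Z" "herm n l x x = 0" for x
    using null_herm_perp_in_Lambda[OF assms that] vs.span_base by blast
  show "w \<in> vs.span ?U"
  proof (cases "herm n l w w = 0")
    case True
    then show ?thesis using null w by blast
  next
    case False
    define \<beta> where "\<beta> = Re (herm n l w w)"
    have w\<beta>: "herm n l w w = of_real \<beta>" "\<beta> \<noteq> 0"
      using False herm_self_real[of n l w] by (auto simp: \<beta>_def)
    obtain v where v: "v \<in> herm_perp n l Z" "Re (herm n l v v) * \<beta> < 0"
      using herm_perp_opposite_sign[OF assms(1,2,4) w\<beta>(2)] by blast
    define u where "u = v - vsc (herm n l v w / of_real \<beta>) w"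
    have "u \<in> herm_perp n l Z"
      using subspace_herm_perp v(1) w by (simp add: u_def vs.subspace_diff vs.subspace_scale)
    have uw: "herm n l w u = 0"
      using herm_orthogonalize(1)[OF w\<beta>, of v] herm_eq_0_commute by (metis u_def)
    have "\<beta> * Re (herm n l u u) < 0"
      using herm_orthogonalize(2)[OF w\<beta>, of v] v(2) unfolding u_def
      by (smt (verit) mult.commute zero_le_power2)
    then obtain c where "herm n l (w + vsc c u) (w + vsc c u) = 0" "herm n l (w - vsc c u) (w - vsc c u) = 0"
      using obtain_null_pair[OF uw] by (metis \<beta>_def)
    moreover have "w + vsc c u \<in> herm_perp n l Z" "w - vsc c u \<in> herm_perp n l Z"
      using subspace_herm_perp w \<open>u \<in> herm_perp n l Z\<close>
      by (simp_all add: vs.subspace_add vs.subspace_diff vs.subspace_scale)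
    ultimately show ?thesis
      using null vs_span_midpoint by blast
  qed
qed

section \<open>Tangent vectors\<close>

lemma T10S_apply_in_herm_perp:
  assumes "\<phi> \<in> T10S n l Z" "z \<in> Z"
  shows "\<phi> z \<in> herm_perp n l Z"
proof -
  have "herm n l (\<phi> z) w = 0" if w: "w \<in> Z" for w
  proof -
    have "herm n l (\<phi> z) w + herm n l z (\<phi> w) = 0"
      "herm n l (hsc \<i> \<phi> z) w + herm n l z (hsc \<i> \<phi> w) = 0"
      using assms w by (auto simp: T10S_def TS_def)
    then show ?thesis
      by (simp add: hsc_def herm_scale_left herm_scale_right algebra_simps)
  qed
  moreover have "\<phi> z \<in> ambient n"
    using assms by (auto simp: T10S_def TS_def hom_into_def)
  ultimately show ?thesis
    by (simp add: herm_perp_def)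
qed

lemma hom_into_apply_sum:
  assumes "\<phi> \<in> hom_into Z Y" "vs.subspace Z" "finite A" "A \<subseteq> Z"
  shows "\<phi> (\<Sum>a\<in>A. vsc (f a) a) = (\<Sum>a\<in>A. vsc (f a) (\<phi> a))"
  using assms(3,4)
proof (induction A rule: finite_induct)
  case empty
  have "\<phi> (vsc 0 0) = vsc 0 (\<phi> 0)"
    using assms(1,2) vs.subspace_0 unfolding hom_into_def by blast
  then have "\<phi> 0 = 0"
    by (simp add: vs.scale_zero_left vs.scale_zero_right)
  then show ?case
    by (simp only: sum.empty)
next
  case (insert a A)
  have "(\<Sum>a\<in>A. vsc (f a) a) \<in> Z" "vsc (f a) a \<in> Z"
    using insert assms(2) by (auto intro: vs.subspace_sum vs.subspace_scale)
  then have "\<phi> (vsc (f a) a + (\<Sum>a\<in>A. vsc (f a) a)) = vsc (f a) (\<phi> a) + (\<Sum>a\<in>A. vsc (f a) (\<phi> a))"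
    using assms(1) insert by (simp add: hom_into_def del: plus_fun_apply)
  then show ?case
    by (simp only: sum.insert[OF insert(1,2)])
qed

definition rank_one :: "cvec set \<Rightarrow> cvec \<Rightarrow> cvec \<Rightarrow> (cvec \<Rightarrow> cvec)" where
  "rank_one B b x = (\<lambda>v. if v \<in> vs.span B then vsc (vs.representation B v b) x else 0)"

lemma rank_one_add: "rank_one B b (x + y) = rank_one B b x + rank_one B b y"
  by (simp add: rank_one_def fun_eq_iff vsc_def algebra_simps)

lemma rank_one_scale: "rank_one B b (vsc c x) = hsc c (rank_one B b x)"
  by (simp add: rank_one_def fun_eq_iff vsc_def hsc_def algebra_simps)

lemma rank_one_in_hom_into:
  assumes "vs.independent B" "vs.subspace Y" "x \<in> Y"
  shows "rank_one B b x \<in> hom_into (vs.span B) Y"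
  unfolding hom_into_def mem_Collect_eq
proof (intro conjI ballI allI impI)
  fix u v assume "u \<in> vs.span B" "v \<in> vs.span B"
  then show "rank_one B b x (u + v) = rank_one B b x u + rank_one B b x v"
    using vs.representation_add[OF assms(1)]
    by (simp add: rank_one_def vs.span_add vs.scale_left_distrib)
next
  fix c u assume "u \<in> vs.span B"
  then show "rank_one B b x (vsc c u) = vsc c (rank_one B b x u)"
    using vs.representation_scale[OF assms(1)]
    by (simp add: rank_one_def vs.span_scale vs.scale_scale)
qed (use assms(2,3) in \<open>auto simp: rank_one_def vs.subspace_scale\<close>)

lemma hom_into_eq_sum_rank_one:
  assumes "finite B" "vs.independent B" "\<phi> \<in> hom_into (vs.span B) Y"
  shows "\<phi> = (\<Sum>b\<in>B. rank_one B b (\<phi> b))"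
proof
  fix v
  show "\<phi> v = (\<Sum>b\<in>B. rank_one B b (\<phi> b)) v"
  proof (cases "v \<in> vs.span B")
    case True
    have "\<phi> v = \<phi> (\<Sum>b\<in>B. vsc (vs.representation B v b) b)"
      using vs.sum_representation_eq[OF assms(2) True assms(1)] by simp
    also have "\<dots> = (\<Sum>b\<in>B. vsc (vs.representation B v b) (\<phi> b))"
      using assms vs.span_superset by (intro hom_into_apply_sum) auto
    finally show ?thesis
      using True by (simp add: sum_fun_apply rank_one_def)
  next
    case False
    then show ?thesis
      using assms(3) by (simp add: sum_fun_apply rank_one_def hom_into_def)
  qed
qed

lemma T10S_subset_subspace:
  assumes "l + l \<le> n" "csubspace n Z" "isotropic n l Z" "cdim Z < l"
    and "hs.subspace W" "CZ n l Z \<subseteq> W"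
  shows "T10S n l Z \<subseteq> W"
proof
  fix \<phi> assume \<phi>: "\<phi> \<in> T10S n l Z"
  obtain B where B: "finite B" "vs.independent B" "vs.span B = Z"
    using csubspace_obtain_basis[OF assms(2)] by blast
  have "rank_one B b x \<in> W" if "x \<in> herm_perp n l Z" for b x
  proof -
    have "rank_one B b 0 = 0"
      by (simp add: rank_one_def fun_eq_iff vsc_def)
    then have "vs.subspace {x. rank_one B b x \<in> W}"
      using assms(5)
      by (simp add: vs.subspace_def hs.subspace_0 hs.subspace_add hs.subspace_scale
          rank_one_add rank_one_scale)
    moreover have "\<Union>(Lambda n l l Z) \<subseteq> {x. rank_one B b x \<in> W}"
    proof
      fix x assume "x \<in> \<Union>(Lambda n l l Z)"
      then obtain E where "E \<in> Lambda n l l Z" "x \<in> E" by blast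
      then have "rank_one B b x \<in> CZ n l Z"
        using rank_one_in_hom_into[OF B(2)] B(3)
        by (auto simp: CZ_def T10GrE_def Lambda_def Nset_def csubspace_def)
      then show "x \<in> {x. rank_one B b x \<in> W}"
        using assms(6) by blast
    qed
    ultimately show ?thesis
      using vs.span_minimal herm_perp_subset_span_Lambda[OF assms(1-4)] that by blast
  qed
  then have "(\<Sum>b\<in>B. rank_one B b (\<phi> b)) \<in> W"
    using T10S_apply_in_herm_perp[OF \<phi>] B(3) vs.span_superset
    by (intro hs.subspace_sum[OF assms(5)]) blast
  moreover have "\<phi> \<in> hom_into (vs.span B) (ambient n)"
    using \<phi> B(3) by (simp add: T10S_def TS_def)
  ultimately show "\<phi> \<in> W"
    using hom_into_eq_sum_rank_one[OF B(1,2)] by metis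
qed

theorem lemma3p1:
  fixes p q l :: nat and Z :: "cvec set"
  assumes "0 < q" and "q < p" and "q \<le> l" and "2 * l \<le> p + q"
    and "q < l"
    and "Z \<in> Sgr l q p"
  shows "\<not> (\<exists>W. module.subspace hsc W \<and> hom_into Z Z \<subseteq> W
              \<and> W \<subseteq> T10S (p+q) l Z \<and> W \<noteq> T10S (p+q) l Z
              \<and> CZ (p+q) l Z \<subseteq> W)"
proof
  assume "\<exists>W. module.subspace hsc W \<and> hom_into Z Z \<subseteq> W
              \<and> W \<subseteq> T10S (p+q) l Z \<and> W \<noteq> T10S (p+q) l Z
              \<and> CZ (p+q) l Z \<subseteq> W"
  then obtain W where W: "hs.subspace W" "W \<subseteq> T10S (p+q) l Z" "W \<noteq> T10S (p+q) l Z"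
    "CZ (p+q) l Z \<subseteq> W"
    by blast
  have "csubspace (p+q) Z" "isotropic (p+q) l Z" "cdim Z < l"
    using assms(5,6) by (auto simp: Sgr_def Gr_def)
  then have "T10S (p+q) l Z \<subseteq> W"
    using T10S_subset_subspace[OF _ _ _ _ W(1,4)] assms(4) by simp
  with W(2,3) show False
    by blast
qed

end
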